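(* (i) Let $N,P$ be positive integers and let $a\in\{1,\ldots,2P-1\}$, $\phi_0,\phi_1\in\{1,\ldots,2N-1\}$ with $\phi_0+\phi_1<2N$. Take $\boldsymbol a=(a,\ldots,a)$, $\boldsymbol\phi_0=(\phi_0,\ldots,\phi_0)$, $\boldsymbol\phi_1=(\phi_1,\ldots,\phi_1)$, and put $\overline a=a/(2P)$, $f_0=\phi_0/(2N)$, $f_1=\phi_1/(2N)$. Then $|\mathscr A_1|>|\mathscr A_2|$ if and only if $$\frac{1}{2P}\log\binom{2P}{2P\overline a}-\frac{1}{2N}\left[\log\binom{2N}{2N(f_0+f_1)}+\log\binom{2N(f_0+f_1)}{2Nf_1}\right]+(f_0+f_1)>0.$$ (ii) Suppose $a=a(N,P)$, $\phi_0=\phi_0(N,P)$, $\phi_1=\phi_1(N,P)$ are as in (i) for each $N,P$, and that the limits $\overline a^{\infty}=\lim\overline a$, $f_0^\infty=\lim f_0$, $f_1^\infty=\lim f_1$ as $N,P\to\infty$ exist, with $\overline a^\infty,f_0^\infty,f_1^\infty,f_0^\infty+f_1^\infty\in(0,1)$. Let $\Lambda=H(\overline a^\infty,1-\overline a^\infty)-H(f_0^\infty,f_1^\infty,1-f_0^\infty-f_1^\infty)+(f_0^\infty+f_1^\infty)$. If $\Lambda>0$ then $|\mathscr A_1|>|\mathscr A_2|$ for all sufficiently large $N$ and $P$; if $\Lambda<0$ then $|\mathscr A_1|\le|\mathscr A_2|$ for all sufficiently large $N$ and $P$.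
   Context: Let $N,P$ be positive integers. An admixed array is a pair $[\mathbf A,\mathbf X]$ of matrices $\mathbf A=(A_{nj}),\mathbf X=(X_{nj})\in\{0,1\}^{N\times 2P}$; for $p\in[P]$, columns $p$ and $P+p$ form the $p$th locus. The row local ancestry tally of row $n$ is $A_{n\cdot}=\sum_{j=1}^{2P}A_{nj}$. The ancestry-specific allele dosages of locus $p$ are $\Phi_{p,0}=\sum_{n=1}^N[(1-A_{np})X_{np}+(1-A_{n(P+p)})X_{n(P+p)}]$ and $\Phi_{p,1}=\sum_{n=1}^N[A_{np}X_{np}+A_{n(P+p)}X_{n(P+p)}]$. $\mathscr A_1=\mathscr A_1(N,P;\boldsymbol a)$ is the set of admixed arrays with $A_{n\cdot}=a_{n\cdot}$ for all $n$; $\mathscr A_2=\mathscr A_2(N,P;\boldsymbol\phi_0,\boldsymbol\phi_1)$ is the set of admixed arrays with $\Phi_{p,0}=\phi_{p,0}$, $\Phi_{p,1}=\phi_{p,1}$ for all $p$. $\log$ is base 2, and $H(z_1,\ldots,z_I)=\sum_i z_i\log(1/z_i)$ for a probability vector $(z_1,\ldots,z_I)$. *)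

theory Defs
  imports "HOL-Analysis.Analysis"
begin

text \<open>Matrices in {0,1}^(N x 2P) are represented as functions nat => nat => nat,
  0-indexed (rows n < N, columns j < 2P), with entries in {0,1} inside the index
  range and 0 outside of it (so that the representation is unique).
  Locus p < P consists of columns p and P + p.\<close>

definition admixed_arrays :: "nat \<Rightarrow> nat \<Rightarrow> ((nat \<Rightarrow> nat \<Rightarrow> nat) \<times> (nat \<Rightarrow> nat \<Rightarrow> nat)) set" where
  "admixed_arrays N P = {(A, X).
     \<forall>n j. (n < N \<and> j < 2 * P \<longrightarrow> A n j \<le> 1 \<and> X n j \<le> 1) \<and>
           (\<not> (n < N \<and> j < 2 * P) \<longrightarrow> A n j = 0 \<and> X n j = 0)}"

definition row_tally :: "nat \<Rightarrow> (nat \<Rightarrow> nat \<Rightarrow> nat) \<Rightarrow> nat \<Rightarrow> nat" where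
  "row_tally P A n = (\<Sum>j<2 * P. A n j)"

definition Phi0 :: "nat \<Rightarrow> nat \<Rightarrow> (nat \<Rightarrow> nat \<Rightarrow> nat) \<Rightarrow> (nat \<Rightarrow> nat \<Rightarrow> nat) \<Rightarrow> nat \<Rightarrow> nat" where
  "Phi0 N P A X p = (\<Sum>n<N. (1 - A n p) * X n p + (1 - A n (P + p)) * X n (P + p))"

definition Phi1 :: "nat \<Rightarrow> nat \<Rightarrow> (nat \<Rightarrow> nat \<Rightarrow> nat) \<Rightarrow> (nat \<Rightarrow> nat \<Rightarrow> nat) \<Rightarrow> nat \<Rightarrow> nat" where
  "Phi1 N P A X p = (\<Sum>n<N. A n p * X n p + A n (P + p) * X n (P + p))"

definition A1 :: "nat \<Rightarrow> nat \<Rightarrow> (nat \<Rightarrow> nat) \<Rightarrow> ((nat \<Rightarrow> nat \<Rightarrow> nat) \<times> (nat \<Rightarrow> nat \<Rightarrow> nat)) set" where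
  "A1 N P a = {(A, X) \<in> admixed_arrays N P. \<forall>n<N. row_tally P A n = a n}"

definition A2 :: "nat \<Rightarrow> nat \<Rightarrow> (nat \<Rightarrow> nat) \<Rightarrow> (nat \<Rightarrow> nat) \<Rightarrow> ((nat \<Rightarrow> nat \<Rightarrow> nat) \<times> (nat \<Rightarrow> nat \<Rightarrow> nat)) set" where
  "A2 N P phi0 phi1 = {(A, X) \<in> admixed_arrays N P.
      \<forall>p<P. Phi0 N P A X p = phi0 p \<and> Phi1 N P A X p = phi1 p}"

definition H :: "real list \<Rightarrow> real" where
  "H zs = (\<Sum>z\<leftarrow>zs. z * log 2 (1 / z))"

end

theory Submission
  imports Defs "HOL-Real_Asymp.Real_Asymp"
begin

text \<open>
  Both sets factor into independent blocks. In \<open>A1\<close> the rows are independent: a row chooses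
  its \<open>a\<close> cells of ancestry 1 and an arbitrary allele row, so \<open>|A1| = (C(2P,a) 2^(2P))^N\<close>.
  In \<open>A2\<close> the loci (\<open>2N\<close> cells each) are independent: a locus chooses the \<open>\<phi>0 + \<phi>1\<close> cells
  carrying the allele, the \<open>\<phi>1\<close> of them with ancestry 1, and the ancestry of the other cells
  freely, so \<open>|A2| = (C(2N,\<phi>0+\<phi>1) C(\<phi>0+\<phi>1,\<phi>1) 2^(2N-\<phi>0-\<phi>1))^P\<close>. Comparing base-2
  logarithms divided by \<open>2NP\<close> gives (i). For (ii), the Stirling bounds
  \<open>n ln n - n \<le> ln n! \<le> n ln n - n + ln (n + 1) + 1\<close> give \<open>ln C(n,k) = n h(k/n) + O(log n)\<close>
  for the binary entropy \<open>h\<close>, and the chain rule of entropy turns the product of two binomials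
  into the ternary entropy, so the quantity in (i) converges to \<open>\<Lambda>\<close>; its sign is eventually
  that of \<open>\<Lambda>\<close>.
\<close>

section \<open>Counting pairs of subsets\<close>

lemma UN_Int_disjoint_family:
  assumes "disjoint_family_on B K" "p \<in> K" "\<And>q. q \<in> K \<Longrightarrow> F q \<subseteq> B q"
  shows "(\<Union>q\<in>K. F q) \<inter> B p = F p"
proof -
  have "F q \<inter> B p = {}" if "q \<in> K" "q \<noteq> p" for q
    using assms that unfolding disjoint_family_on_def by blast
  then show ?thesis
    using assms by blast
qed

lemma card_subset_pairs_blockwise:
  fixes B :: "'k \<Rightarrow> 'a set"
  assumes K: "finite K" and dj: "disjoint_family_on B K"
  shows "card {(u, v). u \<subseteq> (\<Union>p\<in>K. B p) \<and> v \<subseteq> (\<Union>p\<in>K. B p) \<and> (\<forall>p\<in>K. Q p (u \<inter> B p) (v \<inter> B p))}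
       = (\<Prod>p\<in>K. card {(u, v). u \<subseteq> B p \<and> v \<subseteq> B p \<and> Q p u v})"
proof -
  let ?pairs = "{(u, v). u \<subseteq> (\<Union>p\<in>K. B p) \<and> v \<subseteq> (\<Union>p\<in>K. B p) \<and> (\<forall>p\<in>K. Q p (u \<inter> B p) (v \<inter> B p))}"
  let ?S = "\<lambda>p. {(u, v). u \<subseteq> B p \<and> v \<subseteq> B p \<and> Q p u v}"
  let ?restrict = "\<lambda>(u, v). \<lambda>p\<in>K. (u \<inter> B p, v \<inter> B p)"
  let ?glue = "\<lambda>h. (\<Union>p\<in>K. fst (h p), \<Union>p\<in>K. snd (h p))"
  have glue_restrict: "?glue h \<in> ?pairs \<and> ?restrict (?glue h) = h" if h: "h \<in> Pi\<^sub>E K ?S" for h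
  proof -
    have sub: "\<forall>q\<in>K. fst (h q) \<subseteq> B q \<and> snd (h q) \<subseteq> B q \<and> Q q (fst (h q)) (snd (h q))"
      using h by (auto simp: PiE_iff case_prod_beta)
    have "(\<Union>q\<in>K. fst (h q)) \<inter> B p = fst (h p)" "(\<Union>q\<in>K. snd (h q)) \<inter> B p = snd (h p)" if "p \<in> K" for p
      using sub by (auto intro!: UN_Int_disjoint_family[OF dj that])
    then show ?thesis
      using h sub by (auto simp: PiE_iff extensional_def fun_eq_iff) blast
  qed
  have "bij_betw ?restrict ?pairs (Pi\<^sub>E K ?S)"
    by (rule bij_betw_byWitness[where f' = ?glue]) (use glue_restrict in \<open>auto simp: image_subset_iff\<close>)
  then have "card ?pairs = card (Pi\<^sub>E K ?S)"
    by (rule bij_betw_same_card)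
  also have "\<dots> = (\<Prod>p\<in>K. card (?S p))"
    using K by (rule card_PiE)
  finally show ?thesis .
qed

lemma card_subset_pairs_card_fst:
  assumes "finite B"
  shows "card {(u, v). u \<subseteq> B \<and> v \<subseteq> B \<and> card u = k} = (card B choose k) * 2 ^ card B"
proof -
  have "{(u, v). u \<subseteq> B \<and> v \<subseteq> B \<and> card u = k} = {u. u \<subseteq> B \<and> card u = k} \<times> Pow B"
    by auto
  then show ?thesis
    using assms by (simp add: card_cartesian_product n_subsets card_Pow)
qed

lemma card_subset_pairs_diff_inter:
  assumes L: "finite L"
  shows "card {(u, v). u \<subseteq> L \<and> v \<subseteq> L \<and> card (v - u) = k0 \<and> card (v \<inter> u) = k1}
     = (card L choose (k0 + k1)) * ((k0 + k1) choose k1) * 2 ^ (card L - (k0 + k1))"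
proof -
  let ?s = "k0 + k1"
  let ?pairs = "{(u, v). u \<subseteq> L \<and> v \<subseteq> L \<and> card (v - u) = k0 \<and> card (v \<inter> u) = k1}"
  let ?T = "{T. T \<subseteq> L \<and> card T = ?s}"
  let ?B = "\<lambda>T. {U. U \<subseteq> T \<and> card U = k1} \<times> Pow (L - T)"
  have fin: "finite T" if "T \<subseteq> L" for T
    using L that finite_subset by blast
  \<comment> \<open>\<open>(u, v)\<close> is determined by \<open>v\<close>, the part of \<open>u\<close> inside \<open>v\<close> and the part outside\<close>
  have "bij_betw (\<lambda>(u, v). (v, v \<inter> u, u - v)) ?pairs (Sigma ?T ?B)"
  proof (rule bij_betw_byWitness[where f' = "\<lambda>(T, U, W). (U \<union> W, T)"])
    show "(\<lambda>(u, v). (v, v \<inter> u, u - v)) ` ?pairs \<subseteq> Sigma ?T ?B"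
    proof (rule image_subsetI)
      fix x assume "x \<in> ?pairs"
      then obtain u v where uv: "x = (u, v)" "u \<subseteq> L" "v \<subseteq> L" "card (v - u) = k0" "card (v \<inter> u) = k1"
        by blast
      have "card v = card (v \<inter> u) + card (v - u)"
        using fin[OF \<open>v \<subseteq> L\<close>] by (rule card_Int_Diff)
      then show "(\<lambda>(u, v). (v, v \<inter> u, u - v)) x \<in> Sigma ?T ?B"
        using uv by auto
    qed
    show "(\<lambda>(T, U, W). (U \<union> W, T)) ` Sigma ?T ?B \<subseteq> ?pairs"
    proof (rule image_subsetI)
      fix x assume "x \<in> Sigma ?T ?B"
      then obtain T U W
        where TUW: "x = (T, U, W)" "T \<subseteq> L" "card T = ?s" "U \<subseteq> T" "card U = k1" "W \<subseteq> L - T"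
        by blast
      then have "T - (U \<union> W) = T - U" "T \<inter> (U \<union> W) = U"
        by auto
      moreover have "card (T - U) = k0"
        using TUW fin by (simp add: card_Diff_subset finite_subset)
      ultimately show "(\<lambda>(T, U, W). (U \<union> W, T)) x \<in> ?pairs"
        using TUW by auto
    qed
  qed auto
  then have "card ?pairs = (\<Sum>T\<in>?T. card (?B T))"
    using L fin by (simp add: bij_betw_same_card card_SigmaI finite_subset[of _ "Pow L"])
  also have "\<dots> = (\<Sum>T\<in>?T. (?s choose k1) * 2 ^ (card L - ?s))"
    using fin
    by (intro sum.cong refl) (simp add: card_cartesian_product card_Pow n_subsets card_Diff_subset)
  also have "\<dots> = (card L choose ?s) * (?s choose k1) * 2 ^ (card L - ?s)"
    using L by (simp add: n_subsets)
  finally show ?thesis .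
qed

section \<open>Admixed arrays as pairs of cell sets\<close>

definition cells :: "nat \<Rightarrow> nat \<Rightarrow> (nat \<times> nat) set" where
  "cells N P = {..<N} \<times> {..<2 * P}"

definition row_cells :: "nat \<Rightarrow> nat \<Rightarrow> (nat \<times> nat) set" where
  "row_cells P n = {n} \<times> {..<2 * P}"

definition locus_cells :: "nat \<Rightarrow> nat \<Rightarrow> nat \<Rightarrow> (nat \<times> nat) set" where
  "locus_cells N P p = {..<N} \<times> {p, P + p}"

text \<open>An array is encoded by the set \<open>u\<close> of cells with local ancestry 1 and the set \<open>v\<close> of
  cells carrying the allele.\<close>

definition array_of_sets ::
    "(nat \<times> nat) set \<times> (nat \<times> nat) set \<Rightarrow> (nat \<Rightarrow> nat \<Rightarrow> nat) \<times> (nat \<Rightarrow> nat \<Rightarrow> nat)" where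
  "array_of_sets = (\<lambda>(u, v). (curry (indicator u), curry (indicator v)))"

lemma binary_matrix_iff_indicator:
  fixes M :: "nat \<Rightarrow> nat \<Rightarrow> nat"
  shows "(\<forall>n j. (n < N \<and> j < 2 * P \<longrightarrow> M n j \<le> 1) \<and> (\<not> (n < N \<and> j < 2 * P) \<longrightarrow> M n j = 0))
    \<longleftrightarrow> (\<exists>S \<subseteq> cells N P. M = curry (indicator S))"
proof
  assume M: "\<forall>n j. (n < N \<and> j < 2 * P \<longrightarrow> M n j \<le> 1) \<and> (\<not> (n < N \<and> j < 2 * P) \<longrightarrow> M n j = 0)"
  let ?S = "{(n, j). M n j = 1}"
  have "M n j = 1 \<Longrightarrow> n < N \<and> j < 2 * P" for n j
    using M by (metis zero_neq_one)
  then have "?S \<subseteq> cells N P"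
    by (auto simp: cells_def)
  moreover have "M n j = curry (indicator ?S) n j" for n j
    using M[rule_format, of n j] by (cases "M n j") (auto simp: indicator_def)
  ultimately show "\<exists>S \<subseteq> cells N P. M = curry (indicator S)"
    by blast
qed (auto simp: cells_def indicator_def)

lemma admixed_arrays_iff:
  "(A, X) \<in> admixed_arrays N P \<longleftrightarrow>
     (\<exists>u \<subseteq> cells N P. A = curry (indicator u)) \<and> (\<exists>v \<subseteq> cells N P. X = curry (indicator v))"
proof -
  have "(A, X) \<in> admixed_arrays N P \<longleftrightarrow>
      (\<forall>n j. (n < N \<and> j < 2 * P \<longrightarrow> A n j \<le> 1) \<and> (\<not> (n < N \<and> j < 2 * P) \<longrightarrow> A n j = 0)) \<and>
      (\<forall>n j. (n < N \<and> j < 2 * P \<longrightarrow> X n j \<le> 1) \<and> (\<not> (n < N \<and> j < 2 * P) \<longrightarrow> X n j = 0))"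
    unfolding admixed_arrays_def by (simp add: all_conj_distrib) blast
  then show ?thesis
    by (simp only: binary_matrix_iff_indicator)
qed

lemma admixed_arrays_eq_image:
  "admixed_arrays N P = array_of_sets ` {(u, v). u \<subseteq> cells N P \<and> v \<subseteq> cells N P}"
  by (auto simp: admixed_arrays_iff array_of_sets_def; blast)

lemma inj_array_of_sets: "inj array_of_sets"
proof (rule injI)
  fix x y assume "array_of_sets x = array_of_sets y"
  then have "\<forall>c. indicator (fst x) c = (indicator (fst y) c :: nat)"
            "\<forall>c. indicator (snd x) c = (indicator (snd y) c :: nat)"
    by (auto simp: array_of_sets_def case_prod_beta fun_eq_iff)
  then show "x = y"
    by (auto simp: prod_eq_iff indicator_def of_bool_eq_iff)
qed

lemma bij_betw_array_of_sets:
  "bij_betw array_of_sets {(u, v). u \<subseteq> cells N P \<and> v \<subseteq> cells N P} (admixed_arrays N P)"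
  unfolding bij_betw_def admixed_arrays_eq_image
  using inj_array_of_sets by (auto intro: inj_on_subset)

lemma cells_eq_UN_row_cells: "cells N P = (\<Union>n<N. row_cells P n)"
  by (auto simp: cells_def row_cells_def)

lemma cells_eq_UN_locus_cells: "cells N P = (\<Union>p<P. locus_cells N P p)"
proof (intro equalityI subsetI)
  fix c assume "c \<in> cells N P"
  then obtain n j where c: "c = (n, j)" "n < N" "j < 2 * P"
    by (auto simp: cells_def)
  show "c \<in> (\<Union>p<P. locus_cells N P p)"
  proof (cases "j < P")
    case True
    then show ?thesis using c by (auto simp: locus_cells_def)
  next
    case False
    then show ?thesis using c by (auto simp: locus_cells_def intro!: bexI[where x = "j - P"])
  qed
qed (auto simp: cells_def locus_cells_def)

lemma finite_locus_cells: "finite (locus_cells N P p)"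
  by (simp add: locus_cells_def)

lemma card_locus_cells: "p < P \<Longrightarrow> card (locus_cells N P p) = 2 * N"
  by (simp add: locus_cells_def card_cartesian_product)

lemma row_tally_indicator: "row_tally P (curry (indicator u)) n = card (u \<inter> row_cells P n)"
proof -
  have "row_tally P (curry (indicator u)) n = (\<Sum>c \<in> row_cells P n. indicator u c)"
    by (simp add: row_tally_def row_cells_def sum.cartesian_product')
  then show ?thesis by (simp add: sum_indicator_eq_card Int_commute row_cells_def)
qed

lemma sum_locus_cells:
  assumes "p < P"
  shows "(\<Sum>n<N. g (n, p) + g (n, P + p)) = (\<Sum>c \<in> locus_cells N P p. g c)"
  using assms by (simp add: locus_cells_def sum.cartesian_product')

lemma Phi0_indicator:
  assumes "p < P"
  shows "Phi0 N P (curry (indicator u)) (curry (indicator v)) p = card (locus_cells N P p \<inter> (v - u))"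
proof -
  have "(1 - indicator u c) * indicator v c = (indicator (v - u) c :: nat)" for c
    by (simp add: indicator_def)
  then have "Phi0 N P (curry (indicator u)) (curry (indicator v)) p
      = (\<Sum>c \<in> locus_cells N P p. indicator (v - u) c)"
    using sum_locus_cells[OF assms] by (simp add: Phi0_def)
  then show ?thesis by (simp add: sum_indicator_eq_card locus_cells_def)
qed

lemma Phi1_indicator:
  assumes "p < P"
  shows "Phi1 N P (curry (indicator u)) (curry (indicator v)) p = card (locus_cells N P p \<inter> (v \<inter> u))"
proof -
  have "indicator u c * indicator v c = (indicator (v \<inter> u) c :: nat)" for c
    by (auto simp: indicator_def)
  then have "Phi1 N P (curry (indicator u)) (curry (indicator v)) p
      = (\<Sum>c \<in> locus_cells N P p. indicator (v \<inter> u) c)"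
    using sum_locus_cells[OF assms] by (simp add: Phi1_def)
  then show ?thesis by (simp add: sum_indicator_eq_card locus_cells_def)
qed

lemma bij_betw_sets_A1:
  "bij_betw array_of_sets
     {(u, v). u \<subseteq> cells N P \<and> v \<subseteq> cells N P \<and> (\<forall>n<N. card (u \<inter> row_cells P n) = a n)}
     (A1 N P a)"
proof -
  have "A1 N P a = {AX \<in> admixed_arrays N P. \<forall>n<N. row_tally P (fst AX) n = a n}"
    by (auto simp: A1_def)
  moreover have "{(u, v). u \<subseteq> cells N P \<and> v \<subseteq> cells N P \<and> (\<forall>n<N. card (u \<inter> row_cells P n) = a n)}
    = {uv \<in> {(u, v). u \<subseteq> cells N P \<and> v \<subseteq> cells N P}. \<forall>n<N. card (fst uv \<inter> row_cells P n) = a n}"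
    by auto
  ultimately show ?thesis
    by (simp only:) (rule bij_betw_Collect[OF bij_betw_array_of_sets],
                     simp add: array_of_sets_def row_tally_indicator case_prod_beta)
qed

lemma bij_betw_sets_A2:
  "bij_betw array_of_sets
     {(u, v). u \<subseteq> cells N P \<and> v \<subseteq> cells N P \<and>
        (\<forall>p<P. card (locus_cells N P p \<inter> (v - u)) = f0 p \<and> card (locus_cells N P p \<inter> (v \<inter> u)) = f1 p)}
     (A2 N P f0 f1)"
proof -
  have "A2 N P f0 f1 =
      {AX \<in> admixed_arrays N P.
         \<forall>p<P. Phi0 N P (fst AX) (snd AX) p = f0 p \<and> Phi1 N P (fst AX) (snd AX) p = f1 p}"
    by (auto simp: A2_def)
  moreover have "{(u, v). u \<subseteq> cells N P \<and> v \<subseteq> cells N P \<and>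
      (\<forall>p<P. card (locus_cells N P p \<inter> (v - u)) = f0 p \<and> card (locus_cells N P p \<inter> (v \<inter> u)) = f1 p)}
    = {uv \<in> {(u, v). u \<subseteq> cells N P \<and> v \<subseteq> cells N P}.
         \<forall>p<P. card (locus_cells N P p \<inter> (snd uv - fst uv)) = f0 p \<and>
               card (locus_cells N P p \<inter> (snd uv \<inter> fst uv)) = f1 p}"
    by auto
  ultimately show ?thesis
    by (simp only:) (rule bij_betw_Collect[OF bij_betw_array_of_sets],
                     simp add: array_of_sets_def Phi0_indicator Phi1_indicator case_prod_beta)
qed

lemma card_A1: "card (A1 N P (\<lambda>_. a)) = ((2 * P choose a) * 2 ^ (2 * P)) ^ N"
proof -
  let ?Q = "\<lambda>_ u (_ :: (nat \<times> nat) set). card u = a"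
  have "card (A1 N P (\<lambda>_. a)) = card {(u, v). u \<subseteq> (\<Union>n\<in>{..<N}. row_cells P n) \<and>
        v \<subseteq> (\<Union>n\<in>{..<N}. row_cells P n) \<and>
        (\<forall>n\<in>{..<N}. ?Q n (u \<inter> row_cells P n) (v \<inter> row_cells P n))}"
    using bij_betw_same_card[OF bij_betw_sets_A1[of N P "\<lambda>_. a"]]
    by (simp add: cells_eq_UN_row_cells Ball_def)
  also have "\<dots> = (\<Prod>n<N. card {(u, v). u \<subseteq> row_cells P n \<and> v \<subseteq> row_cells P n \<and> ?Q n u v})"
    by (rule card_subset_pairs_blockwise) (auto simp: row_cells_def disjoint_family_on_def)
  also have "\<dots> = (\<Prod>n<N. (2 * P choose a) * 2 ^ (2 * P))"
    by (simp add: card_subset_pairs_card_fst row_cells_def card_cartesian_product)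
  finally show ?thesis
    by simp
qed

lemma card_A2:
  "card (A2 N P (\<lambda>_. \<phi>0) (\<lambda>_. \<phi>1))
    = ((2 * N choose (\<phi>0 + \<phi>1)) * ((\<phi>0 + \<phi>1) choose \<phi>1) * 2 ^ (2 * N - (\<phi>0 + \<phi>1))) ^ P"
proof -
  let ?Q = "\<lambda>_ u v. card (v - u) = \<phi>0 \<and> card (v \<inter> u) = \<phi>1"
  have restrict: "(v \<inter> L) - (u \<inter> L) = L \<inter> (v - u)" "(v \<inter> L) \<inter> (u \<inter> L) = L \<inter> (v \<inter> u)"
    for u v L :: "(nat \<times> nat) set"
    by auto
  have "card (A2 N P (\<lambda>_. \<phi>0) (\<lambda>_. \<phi>1)) = card {(u, v). u \<subseteq> (\<Union>p\<in>{..<P}. locus_cells N P p) \<and>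
        v \<subseteq> (\<Union>p\<in>{..<P}. locus_cells N P p) \<and>
        (\<forall>p\<in>{..<P}. ?Q p (u \<inter> locus_cells N P p) (v \<inter> locus_cells N P p))}"
    using bij_betw_same_card[OF bij_betw_sets_A2[of N P "\<lambda>_. \<phi>0" "\<lambda>_. \<phi>1"]]
    by (simp add: cells_eq_UN_locus_cells restrict Ball_def)
  also have "\<dots> = (\<Prod>p<P. card {(u, v). u \<subseteq> locus_cells N P p \<and> v \<subseteq> locus_cells N P p \<and> ?Q p u v})"
    by (rule card_subset_pairs_blockwise) (auto simp: locus_cells_def disjoint_family_on_def)
  also have "\<dots> = (\<Prod>p<P. (2 * N choose (\<phi>0 + \<phi>1)) * ((\<phi>0 + \<phi>1) choose \<phi>1) * 2 ^ (2 * N - (\<phi>0 + \<phi>1)))"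
    by (intro prod.cong refl)
       (simp add: card_subset_pairs_diff_inter card_locus_cells finite_locus_cells)
  finally show ?thesis
    by simp
qed

section \<open>The exact comparison\<close>

definition rate_gap :: "nat \<Rightarrow> nat \<Rightarrow> nat \<Rightarrow> nat \<Rightarrow> nat \<Rightarrow> real" where
  "rate_gap N P a \<phi>0 \<phi>1 =
     1 / (2 * real P) * log 2 (2 * P choose a)
     - 1 / (2 * real N) * (log 2 (2 * N choose (\<phi>0 + \<phi>1)) + log 2 ((\<phi>0 + \<phi>1) choose \<phi>1))
     + (real \<phi>0 / (2 * real N) + real \<phi>1 / (2 * real N))"

lemma log_card_A1:
  assumes "a \<le> 2 * P"
  shows "log 2 (card (A1 N P (\<lambda>_. a))) = real N * (log 2 (2 * P choose a) + 2 * real P)"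
  using assms by (simp add: card_A1 log_nat_power log_mult)

lemma log_card_A2:
  assumes "\<phi>0 + \<phi>1 \<le> 2 * N"
  shows "log 2 (card (A2 N P (\<lambda>_. \<phi>0) (\<lambda>_. \<phi>1))) = real P *
     (log 2 (2 * N choose (\<phi>0 + \<phi>1)) + log 2 ((\<phi>0 + \<phi>1) choose \<phi>1) + 2 * real N - (real \<phi>0 + real \<phi>1))"
  using assms by (simp add: card_A2 log_nat_power log_mult of_nat_diff)

lemma rate_gap_eq_log_card_ratio:
  assumes "0 < N" "0 < P" "a \<le> 2 * P" "\<phi>0 + \<phi>1 \<le> 2 * N"
  shows "rate_gap N P a \<phi>0 \<phi>1 =
    (log 2 (card (A1 N P (\<lambda>_. a))) - log 2 (card (A2 N P (\<lambda>_. \<phi>0) (\<lambda>_. \<phi>1)))) / (2 * real N * real P)"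
  using assms by (simp add: log_card_A1 log_card_A2 rate_gap_def field_simps)

lemma card_A2_less_card_A1_iff:
  assumes "0 < N" "0 < P" "a \<le> 2 * P" "\<phi>0 + \<phi>1 \<le> 2 * N"
  shows "card (A2 N P (\<lambda>_. \<phi>0) (\<lambda>_. \<phi>1)) < card (A1 N P (\<lambda>_. a)) \<longleftrightarrow> 0 < rate_gap N P a \<phi>0 \<phi>1"
proof -
  have "0 < card (A2 N P (\<lambda>_. \<phi>0) (\<lambda>_. \<phi>1))" "0 < card (A1 N P (\<lambda>_. a))"
    using assms by (simp_all add: card_A1 card_A2)
  then have "card (A2 N P (\<lambda>_. \<phi>0) (\<lambda>_. \<phi>1)) < card (A1 N P (\<lambda>_. a)) \<longleftrightarrow>
      log 2 (card (A2 N P (\<lambda>_. \<phi>0) (\<lambda>_. \<phi>1))) < log 2 (card (A1 N P (\<lambda>_. a)))"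
    by (subst log_less_cancel_iff) auto
  then show ?thesis
    using assms by (simp add: rate_gap_eq_log_card_ratio zero_less_divide_iff mult_less_0_iff)
qed

section \<open>Entropy and Stirling bounds\<close>

text \<open>Entropies in nats (\<open>H\<close> counts bits). Terms \<open>0 * ln 0\<close> vanish, so the definitions are
  also right on the boundary of the simplex, where they are used by the Stirling estimates.\<close>

definition binary_entropy :: "real \<Rightarrow> real" where
  "binary_entropy p = - p * ln p - (1 - p) * ln (1 - p)"

definition ternary_entropy :: "real \<Rightarrow> real \<Rightarrow> real" where
  "ternary_entropy x y = - x * ln x - y * ln y - (1 - x - y) * ln (1 - x - y)"

lemma mult_log_inverse: "0 \<le> z \<Longrightarrow> z * log 2 (1 / z) = - z * ln z / ln 2"
  by (cases "z = 0") (simp_all add: log_def ln_div)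

lemma H_pair: "0 \<le> p \<Longrightarrow> p \<le> 1 \<Longrightarrow> H [p, 1 - p] = binary_entropy p / ln 2"
  by (simp add: H_def binary_entropy_def mult_log_inverse) (simp add: field_simps)

lemma H_triple:
  "0 \<le> x \<Longrightarrow> 0 \<le> y \<Longrightarrow> x + y \<le> 1 \<Longrightarrow> H [x, y, 1 - x - y] = ternary_entropy x y / ln 2"
  by (simp add: H_def ternary_entropy_def mult_log_inverse) (simp add: field_simps)

lemma entropy_chain_rule:
  assumes "0 \<le> x" "0 \<le> y"
  shows "binary_entropy (x + y) + (x + y) * binary_entropy (y / (x + y)) = ternary_entropy x y"
proof (cases "x = 0 \<or> y = 0")
  case True
  then show ?thesis
    using assms by (auto simp: binary_entropy_def ternary_entropy_def)
next
  case False
  define s where "s = x + y"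
  have pos: "0 < x" "0 < y" "0 < s"
    using False assms by (auto simp: s_def)
  have "1 - y / s = x / s"
    using pos by (simp add: s_def field_simps)
  then have "s * binary_entropy (y / s) = s * (- (y / s) * (ln y - ln s) - (x / s) * (ln x - ln s))"
    using pos by (simp add: binary_entropy_def ln_div)
  also have "\<dots> = - y * ln y - x * ln x + (x + y) * ln s"
    using pos by (simp add: field_simps)
  finally show ?thesis
    by (simp add: s_def binary_entropy_def ternary_entropy_def algebra_simps)
qed

lemma mult_ln_Suc_le: "real n * ln (real n + 1) \<le> real n * ln (real n) + 1"
proof (cases "n = 0")
  case False
  then have "ln (real n + 1) - ln (real n) \<le> (real n + 1) / real n - 1"
    using ln_le_minus_one[of "(real n + 1) / real n"] by (simp add: ln_div)
  then have "real n * (ln (real n + 1) - ln (real n)) \<le> 1"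
    using False by (simp add: field_simps)
  then show ?thesis
    by (simp add: algebra_simps)
qed simp

lemma mult_ln_Suc_ge:
  assumes "0 < n"
  shows "(real n + 1) * ln (real n) + 1 \<le> (real n + 1) * ln (real n + 1)"
proof -
  have "ln (real n) - ln (real n + 1) \<le> real n / (real n + 1) - 1"
    using assms ln_le_minus_one[of "real n / (real n + 1)"] by (simp add: ln_div)
  then have "(real n + 1) * (ln (real n) - ln (real n + 1)) \<le> - 1"
    by (simp add: field_simps)
  then show ?thesis
    by (simp add: algebra_simps)
qed

lemma ln_fact_Suc: "ln (fact (Suc n) :: real) = ln (real n + 1) + ln (fact n)"
  by (simp add: ln_mult add.commute)

lemma ln_fact_ge: "real n * ln (real n) - real n \<le> ln (fact n)"
proof (induction n)
  case (Suc n)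
  have "real (Suc n) * ln (real (Suc n)) - real (Suc n)
      \<le> ln (real n + 1) + (real n * ln (real n) - real n)"
    using mult_ln_Suc_le[of n] by (simp add: algebra_simps)
  also have "\<dots> \<le> ln (real n + 1) + ln (fact n)"
    using Suc by simp
  finally show ?case
    by (simp only: ln_fact_Suc)
qed simp

lemma ln_fact_le: "ln (fact n) \<le> (real n + 1) * ln (real n + 1) - real n"
proof (induction n)
  case (Suc n)
  have "ln (fact (Suc n)) = ln (real n + 1) + ln (fact n)"
    by (rule ln_fact_Suc)
  also have "\<dots> \<le> (real n + 2) * ln (real n + 1) - real n"
    using Suc by (simp add: algebra_simps)
  also have "\<dots> \<le> (real (Suc n) + 1) * ln (real (Suc n) + 1) - real (Suc n)"
    using mult_ln_Suc_ge[of "Suc n"] by (simp add: algebra_simps)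
  finally show ?case .
qed simp

lemma stirling_error_bounds:
  "0 \<le> ln (fact n) - (real n * ln (real n) - real n)"
  "ln (fact n) - (real n * ln (real n) - real n) \<le> ln (real n + 1) + 1"
  using ln_fact_ge[of n] ln_fact_le[of n] mult_ln_Suc_le[of n] by (simp_all add: algebra_simps)

lemma mult_binary_entropy:
  assumes "k \<le> n"
  shows "real n * binary_entropy (real k / real n)
    = real n * ln (real n) - real k * ln (real k) - real (n - k) * ln (real (n - k))"
proof (cases "n = 0")
  case False
  have split: "real m * ln (real m / real n) = real m * ln (real m) - real m * ln (real n)" for m
    using False by (cases "m = 0") (simp_all add: ln_div algebra_simps)
  have cancel: "c * (- (x / c) * A - (y / c) * B) = - (x * A) - y * B" if "c \<noteq> 0" for c x y A B :: real
    using that by (simp add: field_simps)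
  have "1 - real k / real n = real (n - k) / real n"
    using assms False by (simp add: of_nat_diff field_simps)
  then have "real n * binary_entropy (real k / real n)
      = real n * (- (real k / real n) * ln (real k / real n)
                  - (real (n - k) / real n) * ln (real (n - k) / real n))"
    by (simp only: binary_entropy_def)
  also have "\<dots> = - (real k * ln (real k / real n)) - real (n - k) * ln (real (n - k) / real n)"
    using False by (simp only: cancel of_nat_eq_0_iff not_False_eq_True)
  also have "\<dots> = (real k + real (n - k)) * ln (real n)
                   - real k * ln (real k) - real (n - k) * ln (real (n - k))"
    by (simp only: split) (simp add: algebra_simps)
  also have "real k + real (n - k) = real n"
    using assms by simp
  finally show ?thesis .
qed (use assms in simp)

lemma ln_binomial_approx:
  assumes "k \<le> n"
  shows "\<bar>ln (real (n choose k)) - real n * binary_entropy (real k / real n)\<bar>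
           \<le> 2 * (ln (real n + 1) + 1)"
proof -
  define e where "e m = ln (fact m) - (real m * ln (real m) - real m)" for m
  define B where "B = ln (real n + 1) + 1"
  have e_bounds: "0 \<le> e m \<and> e m \<le> B" if "m \<le> n" for m
  proof -
    have "ln (real m + 1) \<le> ln (real n + 1)"
      using that by simp
    then show ?thesis
      using stirling_error_bounds[of m] unfolding e_def B_def by linarith
  qed
  have "ln (real (n choose k)) = ln (fact n) - ln (fact k) - ln (fact (n - k))"
    using assms by (simp add: binomial_fact ln_div ln_mult)
  moreover have "real (n - k) = real n - real k"
    using assms by simp
  ultimately have
    "ln (real (n choose k)) - real n * binary_entropy (real k / real n) = e n - e k - e (n - k)"
    unfolding mult_binary_entropy[OF assms] e_def by linarith
  moreover have "\<bar>e n - e k - e (n - k)\<bar> \<le> 2 * B"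
    using e_bounds[OF order_refl] e_bounds[OF assms] e_bounds[OF diff_le_self[of n k]] by linarith
  ultimately show ?thesis
    by (simp add: B_def)
qed

lemma ln_trinomial_approx:
  assumes "k0 + k1 \<le> n"
  shows "\<bar>ln (real (n choose (k0 + k1))) + ln (real ((k0 + k1) choose k1))
           - real n * ternary_entropy (real k0 / real n) (real k1 / real n)\<bar> \<le> 4 * (ln (real n + 1) + 1)"
proof -
  define s where "s = k0 + k1"
  define B where "B = ln (real n + 1) + 1"
  have chain: "real n * ternary_entropy (real k0 / real n) (real k1 / real n)
      = real n * binary_entropy (real s / real n) + real s * binary_entropy (real k1 / real s)"
  proof (cases "n = 0")
    case False
    have "real k0 / real n + real k1 / real n = real s / real n"
      by (simp add: s_def add_divide_distrib)
    moreover have "(real k1 / real n) / (real s / real n) = real k1 / real s"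
      using False by simp
    ultimately have "ternary_entropy (real k0 / real n) (real k1 / real n)
        = binary_entropy (real s / real n) + real s / real n * binary_entropy (real k1 / real s)"
      using entropy_chain_rule[of "real k0 / real n" "real k1 / real n"] False by simp
    then show ?thesis
      using False by (simp add: distrib_left)
  qed (use assms s_def in simp)
  have "\<bar>ln (real (n choose s)) - real n * binary_entropy (real s / real n)\<bar> \<le> 2 * B"
    using ln_binomial_approx[of s n] assms by (simp add: s_def B_def)
  moreover have "\<bar>ln (real (s choose k1)) - real s * binary_entropy (real k1 / real s)\<bar> \<le> 2 * B"
  proof -
    have "\<bar>ln (real (s choose k1)) - real s * binary_entropy (real k1 / real s)\<bar>
        \<le> 2 * (ln (real s + 1) + 1)"
      by (rule ln_binomial_approx) (simp add: s_def)
    moreover have "ln (real s + 1) \<le> ln (real n + 1)"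
      using assms by (simp add: s_def)
    ultimately show ?thesis
      unfolding B_def by argo
  qed
  ultimately show ?thesis
    unfolding chain s_def[symmetric] B_def[symmetric] by linarith
qed

section \<open>The asymptotic comparison\<close>

lemma tendsto_rate_of_log_error:
  fixes n :: "'a \<Rightarrow> nat" and g h :: "'a \<Rightarrow> real"
  assumes n: "filterlim n at_top F"
    and err: "\<forall>\<^sub>F x in F. \<bar>g x - real (n x) * h x\<bar> \<le> c * (ln (real (n x) + 1) + 1)"
    and h: "(h \<longlongrightarrow> L) F"
  shows "((\<lambda>x. g x / real (n x)) \<longlongrightarrow> L) F"
proof -
  have "((\<lambda>m::nat. c * (ln (real m + 1) + 1) / real m) \<longlongrightarrow> 0) at_top"
    by real_asymp
  then have small: "((\<lambda>x. c * (ln (real (n x) + 1) + 1) / real (n x)) \<longlongrightarrow> 0) F"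
    using filterlim_compose[OF _ n] by blast
  have pos: "\<forall>\<^sub>F x in F. 0 < n x"
    using eventually_compose_filterlim[OF eventually_gt_at_top n] .
  have "\<forall>\<^sub>F x in F.
      norm ((g x - real (n x) * h x) / real (n x)) \<le> c * (ln (real (n x) + 1) + 1) / real (n x)"
    using err pos by eventually_elim (auto simp: abs_divide intro: divide_right_mono)
  then have "((\<lambda>x. (g x - real (n x) * h x) / real (n x)) \<longlongrightarrow> 0) F"
    using small by (rule Lim_null_comparison)
  then have "((\<lambda>x. h x + (g x - real (n x) * h x) / real (n x)) \<longlongrightarrow> L) F"
    using tendsto_add[OF h] by fastforce
  then show ?thesis
    by (rule Lim_transform_eventually) (use pos in \<open>eventually_elim, simp add: field_simps\<close>)
qed

lemma tendsto_binary_entropy: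
  assumes "(r \<longlongrightarrow> p) F" "0 < p" "p < 1"
  shows "((\<lambda>x. binary_entropy (r x)) \<longlongrightarrow> binary_entropy p) F"
  unfolding binary_entropy_def using assms by (intro tendsto_intros) auto

lemma tendsto_ternary_entropy:
  assumes "(r0 \<longlongrightarrow> x) F" "(r1 \<longlongrightarrow> y) F" "0 < x" "0 < y" "x + y < 1"
  shows "((\<lambda>t. ternary_entropy (r0 t) (r1 t)) \<longlongrightarrow> ternary_entropy x y) F"
  unfolding ternary_entropy_def using assms by (intro tendsto_intros) auto

lemma rate_gap_ln:
  "rate_gap N P a \<phi>0 \<phi>1 =
     (ln (2 * P choose a) / (2 * real P)
      - (ln (2 * N choose (\<phi>0 + \<phi>1)) + ln ((\<phi>0 + \<phi>1) choose \<phi>1)) / (2 * real N)) / ln 2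
     + (real \<phi>0 / (2 * real N) + real \<phi>1 / (2 * real N))"
  by (simp add: rate_gap_def log_def diff_divide_distrib add_divide_distrib mult_ac)

lemma rate_gap_tendsto:
  fixes N P a \<phi>0 \<phi>1 :: "'a \<Rightarrow> nat"
  assumes N: "filterlim N at_top F" and P: "filterlim P at_top F"
    and valid: "\<forall>\<^sub>F x in F. a x \<le> 2 * P x \<and> \<phi>0 x + \<phi>1 x \<le> 2 * N x"
    and la: "((\<lambda>x. real (a x) / (2 * real (P x))) \<longlongrightarrow> \<alpha>) F"
    and l0: "((\<lambda>x. real (\<phi>0 x) / (2 * real (N x))) \<longlongrightarrow> f0) F"
    and l1: "((\<lambda>x. real (\<phi>1 x) / (2 * real (N x))) \<longlongrightarrow> f1) F"
    and bounds: "0 < \<alpha>" "\<alpha> < 1" "0 < f0" "0 < f1" "f0 + f1 < 1"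
  shows "((\<lambda>x. rate_gap (N x) (P x) (a x) (\<phi>0 x) (\<phi>1 x))
           \<longlongrightarrow> H [\<alpha>, 1 - \<alpha>] - H [f0, f1, 1 - f0 - f1] + (f0 + f1)) F"
proof -
  have N2: "filterlim (\<lambda>x. 2 * N x) at_top F" and P2: "filterlim (\<lambda>x. 2 * P x) at_top F"
    by (auto intro: filterlim_at_top_mono[OF N] filterlim_at_top_mono[OF P])
  have rows: "((\<lambda>x. ln (2 * P x choose a x) / real (2 * P x)) \<longlongrightarrow> binary_entropy \<alpha>) F"
  proof (rule tendsto_rate_of_log_error[OF P2])
    show "\<forall>\<^sub>F x in F.
        \<bar>ln (2 * P x choose a x) - real (2 * P x) * binary_entropy (real (a x) / real (2 * P x))\<bar>
        \<le> 2 * (ln (real (2 * P x) + 1) + 1)"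
      using valid by eventually_elim (simp only: ln_binomial_approx)
    show "((\<lambda>x. binary_entropy (real (a x) / real (2 * P x))) \<longlongrightarrow> binary_entropy \<alpha>) F"
      using tendsto_binary_entropy[OF la bounds(1,2)] by simp
  qed
  have loci: "((\<lambda>x. (ln (2 * N x choose (\<phi>0 x + \<phi>1 x)) + ln ((\<phi>0 x + \<phi>1 x) choose \<phi>1 x)) / real (2 * N x))
      \<longlongrightarrow> ternary_entropy f0 f1) F"
  proof (rule tendsto_rate_of_log_error[OF N2])
    show "\<forall>\<^sub>F x in F. \<bar>ln (2 * N x choose (\<phi>0 x + \<phi>1 x)) + ln ((\<phi>0 x + \<phi>1 x) choose \<phi>1 x)
        - real (2 * N x) * ternary_entropy (real (\<phi>0 x) / real (2 * N x)) (real (\<phi>1 x) / real (2 * N x))\<bar>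
        \<le> 4 * (ln (real (2 * N x) + 1) + 1)"
      using valid by eventually_elim (simp only: ln_trinomial_approx)
    show "((\<lambda>x. ternary_entropy (real (\<phi>0 x) / real (2 * N x)) (real (\<phi>1 x) / real (2 * N x)))
        \<longlongrightarrow> ternary_entropy f0 f1) F"
      using tendsto_ternary_entropy[OF l0 l1 bounds(3-5)] by simp
  qed
  have "((\<lambda>x. rate_gap (N x) (P x) (a x) (\<phi>0 x) (\<phi>1 x))
      \<longlongrightarrow> (binary_entropy \<alpha> - ternary_entropy f0 f1) / ln 2 + (f0 + f1)) F"
    unfolding rate_gap_ln using rows loci l0 l1 by (auto intro!: tendsto_intros)
  moreover have "H [\<alpha>, 1 - \<alpha>] - H [f0, f1, 1 - f0 - f1]
      = (binary_entropy \<alpha> - ternary_entropy f0 f1) / ln 2"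
    using bounds by (simp add: H_pair H_triple diff_divide_distrib)
  ultimately show ?thesis
    by simp
qed

lemma eventually_card_comparison:
  fixes N P a \<phi>0 \<phi>1 :: "'a \<Rightarrow> nat"
  assumes N: "filterlim N at_top F" and P: "filterlim P at_top F"
    and valid: "\<forall>\<^sub>F x in F. a x \<le> 2 * P x \<and> \<phi>0 x + \<phi>1 x \<le> 2 * N x"
    and la: "((\<lambda>x. real (a x) / (2 * real (P x))) \<longlongrightarrow> \<alpha>) F"
    and l0: "((\<lambda>x. real (\<phi>0 x) / (2 * real (N x))) \<longlongrightarrow> f0) F"
    and l1: "((\<lambda>x. real (\<phi>1 x) / (2 * real (N x))) \<longlongrightarrow> f1) F"
    and bounds: "0 < \<alpha>" "\<alpha> < 1" "0 < f0" "0 < f1" "f0 + f1 < 1"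
  defines "\<Lambda> \<equiv> H [\<alpha>, 1 - \<alpha>] - H [f0, f1, 1 - f0 - f1] + (f0 + f1)"
  shows "0 < \<Lambda> \<Longrightarrow>
           \<forall>\<^sub>F x in F. card (A2 (N x) (P x) (\<lambda>_. \<phi>0 x) (\<lambda>_. \<phi>1 x)) < card (A1 (N x) (P x) (\<lambda>_. a x))"
    and "\<Lambda> < 0 \<Longrightarrow>
           \<forall>\<^sub>F x in F. card (A1 (N x) (P x) (\<lambda>_. a x)) \<le> card (A2 (N x) (P x) (\<lambda>_. \<phi>0 x) (\<lambda>_. \<phi>1 x))"
proof -
  have lim: "((\<lambda>x. rate_gap (N x) (P x) (a x) (\<phi>0 x) (\<phi>1 x)) \<longlongrightarrow> \<Lambda>) F"
    unfolding \<Lambda>_def by (rule rate_gap_tendsto[OF N P valid la l0 l1 bounds])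
  have "\<forall>\<^sub>F x in F. 0 < N x" "\<forall>\<^sub>F x in F. 0 < P x"
    using eventually_compose_filterlim[OF eventually_gt_at_top] N P by blast+
  with valid have iff: "\<forall>\<^sub>F x in F.
      card (A2 (N x) (P x) (\<lambda>_. \<phi>0 x) (\<lambda>_. \<phi>1 x)) < card (A1 (N x) (P x) (\<lambda>_. a x))
      \<longleftrightarrow> 0 < rate_gap (N x) (P x) (a x) (\<phi>0 x) (\<phi>1 x)"
    by eventually_elim (simp add: card_A2_less_card_A1_iff)
  show "\<forall>\<^sub>F x in F. card (A2 (N x) (P x) (\<lambda>_. \<phi>0 x) (\<lambda>_. \<phi>1 x)) < card (A1 (N x) (P x) (\<lambda>_. a x))"
    if "0 < \<Lambda>"
    using order_tendstoD(1)[OF lim that] iff by eventually_elim simp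
  show "\<forall>\<^sub>F x in F. card (A1 (N x) (P x) (\<lambda>_. a x)) \<le> card (A2 (N x) (P x) (\<lambda>_. \<phi>0 x) (\<lambda>_. \<phi>1 x))"
    if "\<Lambda> < 0"
    using order_tendstoD(2)[OF lim that] iff by eventually_elim (simp add: not_less[symmetric])
qed

theorem mainTheorem5:
  shows
  "(\<forall>(N::nat) (P::nat) (a::nat) (\<phi>0::nat) (\<phi>1::nat).
      0 < N \<and> 0 < P \<and> 1 \<le> a \<and> a \<le> 2 * P - 1 \<and>
      1 \<le> \<phi>0 \<and> \<phi>0 \<le> 2 * N - 1 \<and> 1 \<le> \<phi>1 \<and> \<phi>1 \<le> 2 * N - 1 \<and> \<phi>0 + \<phi>1 < 2 * N \<longrightarrow>
      (let abar = real a / (2 * real P); f0 = real \<phi>0 / (2 * real N); f1 = real \<phi>1 / (2 * real N) in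
       card (A2 N P (\<lambda>_. \<phi>0) (\<lambda>_. \<phi>1)) < card (A1 N P (\<lambda>_. a)) \<longleftrightarrow>
         1 / (2 * real P) * log 2 (real ((2 * P) choose nat (round (2 * real P * abar))))
         - 1 / (2 * real N) * (log 2 (real ((2 * N) choose nat (round (2 * real N * (f0 + f1)))))
                              + log 2 (real (nat (round (2 * real N * (f0 + f1))) choose nat (round (2 * real N * f1)))))
         + (f0 + f1) > 0))
   \<and>
   (\<forall>(a::nat \<Rightarrow> nat \<Rightarrow> nat) (\<phi>0::nat \<Rightarrow> nat \<Rightarrow> nat) (\<phi>1::nat \<Rightarrow> nat \<Rightarrow> nat) (ainf::real) (f0inf::real) (f1inf::real).
      (\<forall>N P. 0 < N \<and> 0 < P \<longrightarrow>
          1 \<le> a N P \<and> a N P \<le> 2 * P - 1 \<and>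
          1 \<le> \<phi>0 N P \<and> \<phi>0 N P \<le> 2 * N - 1 \<and> 1 \<le> \<phi>1 N P \<and> \<phi>1 N P \<le> 2 * N - 1 \<and>
          \<phi>0 N P + \<phi>1 N P < 2 * N) \<and>
      ((\<lambda>(N, P). real (a N P) / (2 * real P)) \<longlongrightarrow> ainf) (at_top \<times>\<^sub>F at_top) \<and>
      ((\<lambda>(N, P). real (\<phi>0 N P) / (2 * real N)) \<longlongrightarrow> f0inf) (at_top \<times>\<^sub>F at_top) \<and>
      ((\<lambda>(N, P). real (\<phi>1 N P) / (2 * real N)) \<longlongrightarrow> f1inf) (at_top \<times>\<^sub>F at_top) \<and>
      ainf \<in> {0<..<1} \<and> f0inf \<in> {0<..<1} \<and> f1inf \<in> {0<..<1} \<and> f0inf + f1inf \<in> {0<..<1} \<longrightarrow>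
      (let \<Lambda> = H [ainf, 1 - ainf] - H [f0inf, f1inf, 1 - f0inf - f1inf] + (f0inf + f1inf) in
        (\<Lambda> > 0 \<longrightarrow> (\<forall>\<^sub>F (N, P) in at_top \<times>\<^sub>F at_top.
                        card (A2 N P (\<lambda>_. \<phi>0 N P) (\<lambda>_. \<phi>1 N P)) < card (A1 N P (\<lambda>_. a N P)))) \<and>
        (\<Lambda> < 0 \<longrightarrow> (\<forall>\<^sub>F (N, P) in at_top \<times>\<^sub>F at_top.
                        card (A1 N P (\<lambda>_. a N P)) \<le> card (A2 N P (\<lambda>_. \<phi>0 N P) (\<lambda>_. \<phi>1 N P))))))"
  apply (intro conjI allI impI)
  subgoal premises prems for N P a \<phi>0 \<phi>1
  proof -
    from prems have valid: "0 < N" "0 < P" "a \<le> 2 * P" "\<phi>0 + \<phi>1 \<le> 2 * N"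
      by auto
    have "nat (round (2 * real P * (real a / (2 * real P)))) = a"
      "nat (round (2 * real N * (real \<phi>1 / (2 * real N)))) = \<phi>1"
      "nat (round (2 * real N * (real \<phi>0 / (2 * real N) + real \<phi>1 / (2 * real N)))) = \<phi>0 + \<phi>1"
      using valid by (simp_all add: field_simps flip: of_nat_add)
    then show ?thesis
      using card_A2_less_card_A1_iff[OF valid] by (simp add: rate_gap_def)
  qed
  subgoal premises prems for a \<phi>0 \<phi>1 ainf f0inf f1inf
  proof -
    let ?F = "at_top \<times>\<^sub>F at_top :: (nat \<times> nat) filter"
    have "\<forall>\<^sub>F x in ?F. 0 < fst x \<and> 0 < snd x"
      using eventually_compose_filterlim[OF eventually_gt_at_top filterlim_fst]
            eventually_compose_filterlim[OF eventually_gt_at_top filterlim_snd] eventually_conj by blast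
    moreover have "a N P \<le> 2 * P \<and> \<phi>0 N P + \<phi>1 N P \<le> 2 * N" if "0 < N" "0 < P" for N P
      using prems that by fastforce
    ultimately have "\<forall>\<^sub>F x in ?F.
        a (fst x) (snd x) \<le> 2 * snd x \<and> \<phi>0 (fst x) (snd x) + \<phi>1 (fst x) (snd x) \<le> 2 * fst x"
      by (auto elim: eventually_mono)
    from eventually_card_comparison[OF filterlim_fst filterlim_snd this, of ainf f0inf f1inf] prems
    show ?thesis
      by (simp add: Let_def split_beta')
  qed
  done

end
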